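(* Let $b\ge 2$ be an integer, $n=2^{b-2}$, and let $W^f\in\mathbb{R}^N$ be a nonzero vector whose components have pairwise distinct absolute values. Consider the problem $$\min_{s\in\mathbb{Z},\,Q\in\mathbb{R}^N}\ \|2^sQ-W^f\|_2^2\quad\text{subject to}\quad Q_i\in\{0,\pm 2^{1-n},\pm 2^{2-n},\dots,\pm 2^{-1},\pm 1\}\ \text{for all } i. \tag{P}$$ For a tuple $(k_0,\dots,k_{n-1})$ of nonnegative integers with $k_0+\dots+k_{n-1}\le N$, let $W^f_{[k_0]}$, $W^f_{[k_1]},\dots,W^f_{[k_{n-1}]}$ be as defined in the context, and set $$u(k)=\sum_{t=0}^{n-1}2^{-t}\|W^f_{[k_t]}\|_1,\qquad v(k)=\sum_{t=0}^{n-1}k_t\,2^{-2t}.$$ Define, for $u,v>0$, $$g(u,v)=v\left(2^{\lfloor \log_2 \frac{4u}{3v}\rfloor}-\frac{u}{v}\right)^2-\frac{u^2}{v}.$$ Let $(k_0^*,\dots,k_{n-1}^* )$ be a minimizer of $g(u(k),v(k))$ over all such tuples that are not identically zero. Then a minimizer $(s^*,Q^* )$ of (P) is given by $$Q^*=\sum_{t=0}^{n-1}2^{-t}\,\mathrm{sign}\big(W^f_{[k_t^*]}\big),\qquad s^*=\left\lfloor \log_2\frac{4\sum_{t=0}^{n-1}2^{-t}\|W^f_{[k^*_t]}\|_1}{3\sum_{t=0}^{n-1}k^*_t2^{-2t}}\right\rfloor,$$ and the optimal quantized vector is $2^{s^*}Q^*$.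
   Context: Notation: sort the indices of $W^f$ by decreasing $|W^f_i|$. Given nonnegative integers $k_0,\dots,k_{n-1}$ with $\sum_t k_t\le N$, the vector $W^f_{[k_0]}\in\mathbb{R}^N$ keeps the $k_0$ components of $W^f$ of largest magnitude and sets all other components to zero; $W^f_{[k_1]}$ keeps the next $k_1$ largest-magnitude components (those ranked $k_0+1,\dots,k_0+k_1$) and zeros out all others; in general $W^f_{[k_t]}$ keeps the components ranked $k_0+\dots+k_{t-1}+1,\dots,k_0+\dots+k_t$ in magnitude and zeros out the rest. $\mathrm{sign}$ is applied componentwise with $\mathrm{sign}(0)=0$. $\lfloor\cdot\rfloor$ is the floor function and $\|\cdot\|_1$ the $\ell^1$ norm. *)

theory Defs
  imports Complex_Main
begin

text \<open>Vectors in R^N are functions nat => real, only indices i < N matter.\<close>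

definition mag_rank :: "nat \<Rightarrow> (nat \<Rightarrow> real) \<Rightarrow> nat \<Rightarrow> nat" where
  "mag_rank N W i = card {j. j < N \<and> \<bar>W j\<bar> > \<bar>W i\<bar>}"

text \<open>W_[k_t]: keeps components ranked k_0+...+k_(t-1)+1, ..., k_0+...+k_t
  (1-based), i.e. 0-based ranks in [sum_{s<t} k s, sum_{s<=t} k s).\<close>
definition block :: "nat \<Rightarrow> (nat \<Rightarrow> real) \<Rightarrow> (nat \<Rightarrow> nat) \<Rightarrow> nat \<Rightarrow> nat \<Rightarrow> real" where
  "block N W k t i =
     (if i < N \<and> (\<Sum>s<t. k s) \<le> mag_rank N W i \<and> mag_rank N W i < (\<Sum>s\<le>t. k s)
      then W i else 0)"

definition l1norm :: "nat \<Rightarrow> (nat \<Rightarrow> real) \<Rightarrow> real" where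
  "l1norm N x = (\<Sum>i<N. \<bar>x i\<bar>)"

definition u_fun :: "nat \<Rightarrow> nat \<Rightarrow> (nat \<Rightarrow> real) \<Rightarrow> (nat \<Rightarrow> nat) \<Rightarrow> real" where
  "u_fun n N W k = (\<Sum>t<n. 2 powr (- real t) * l1norm N (block N W k t))"

definition v_fun :: "nat \<Rightarrow> (nat \<Rightarrow> nat) \<Rightarrow> real" where
  "v_fun n k = (\<Sum>t<n. real (k t) * 2 powr (- 2 * real t))"

definition g_fun :: "real \<Rightarrow> real \<Rightarrow> real" where
  "g_fun u v = v * (2 powr (real_of_int \<lfloor>log 2 (4 * u / (3 * v))\<rfloor>) - u / v)\<^sup>2 - u\<^sup>2 / v"

definition admissible :: "nat \<Rightarrow> nat \<Rightarrow> (nat \<Rightarrow> nat) \<Rightarrow> bool" where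
  "admissible n N k \<longleftrightarrow> (\<Sum>t<n. k t) \<le> N \<and> (\<exists>t<n. k t \<noteq> 0)"

definition quant_levels :: "nat \<Rightarrow> real set" where
  "quant_levels n = {0} \<union> {\<sigma> * 2 powr (- real j) | \<sigma> j. \<sigma> \<in> {-1, 1} \<and> j < n}"

definition feasible :: "nat \<Rightarrow> nat \<Rightarrow> (nat \<Rightarrow> real) \<Rightarrow> bool" where
  "feasible n N Q \<longleftrightarrow> (\<forall>i<N. Q i \<in> quant_levels n)"

definition objective :: "nat \<Rightarrow> (nat \<Rightarrow> real) \<Rightarrow> int \<Rightarrow> (nat \<Rightarrow> real) \<Rightarrow> real" where
  "objective N W s Q = (\<Sum>i<N. (2 powr (real_of_int s) * Q i - W i)\<^sup>2)"

end

theory Submission imports Defs begin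

text \<open>Write \<open>x = 2^s\<close>. The objective is \<open>x\<^sup>2 \<Sum>Q\<^sub>i\<^sup>2 - 2x \<Sum>Q\<^sub>iW\<^sub>i + \<parallel>W\<parallel>\<^sup>2\<close>. Grouping the indices of a
  feasible \<open>Q\<close> by the level \<open>|Q\<^sub>i| = 2^-t\<close> yields counts \<open>k\<^sub>t\<close> with \<open>\<Sum>Q\<^sub>i\<^sup>2 = v(k)\<close>, and
  \<open>\<Sum>Q\<^sub>iW\<^sub>i \<le> u(k)\<close> because the larger levels are best spent on the largest \<open>|W\<^sub>i|\<close>
  (summation by parts against the decreasing weights \<open>2^-t\<close>). Over powers of two, \<open>v x\<^sup>2 - 2u x\<close>
  is minimised by the power of two closest to \<open>u/v\<close>, namely \<open>2^\<lfloor>log\<^sub>2(4u/3v)\<rfloor>\<close>, with minimum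
  \<open>g(u,v)\<close>. So every feasible point costs at least \<open>\<parallel>W\<parallel>\<^sup>2 + min g\<close>, and the quantizer built from
  the top-magnitude blocks of an optimal \<open>k\<^sup>*\<close> meets both bounds.\<close>

lemma sum_le_sum_if_card_eq_and_dominated:
  fixes f :: "'a \<Rightarrow> 'b::linordered_idom"
  assumes "finite X" "finite Y" "card X = card Y" "\<And>x y. x \<in> X \<Longrightarrow> y \<in> Y \<Longrightarrow> f x \<le> f y"
  shows "sum f X \<le> sum f Y"
proof (cases "X = {}")
  case True
  then show ?thesis using assms(2,3) by simp
next
  case False
  define c where "c = Max (f ` X)"
  have "c \<in> f ` X" unfolding c_def using False assms(1) by (intro Max_in) auto
  then have c_le: "c \<le> f y" if "y \<in> Y" for y using assms(4) that by auto
  have "sum f X \<le> of_nat (card X) * c"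
    by (rule sum_bounded_above) (use assms(1) in \<open>auto simp: c_def\<close>)
  also have "\<dots> \<le> sum f Y"
    unfolding assms(3) by (rule sum_bounded_below) (use c_le in auto)
  finally show ?thesis .
qed

lemma summation_by_parts_lessThan_Suc:
  fixes w d :: "nat \<Rightarrow> 'a::comm_ring"
  shows "(\<Sum>t<Suc m. w t * d t)
    = w m * (\<Sum>s\<le>m. d s) + (\<Sum>t<m. (w t - w (Suc t)) * (\<Sum>s\<le>t. d s))"
  by (induction m) (simp_all add: algebra_simps)

lemma weighted_sum_le_if_partial_sums_le:
  fixes w a b :: "nat \<Rightarrow> 'a::linordered_idom"
  assumes partial: "\<And>t. (\<Sum>s\<le>t. a s) \<le> (\<Sum>s\<le>t. b s)"
    and decreasing: "\<And>t. w (Suc t) \<le> w t" and nonneg: "\<And>t. 0 \<le> w t"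
  shows "(\<Sum>t<n. w t * a t) \<le> (\<Sum>t<n. w t * b t)"
proof (cases n)
  case 0
  then show ?thesis by simp
next
  case (Suc m)
  define d where "d t = b t - a t" for t
  have D: "0 \<le> (\<Sum>s\<le>t. d s)" for t
    using partial[of t] by (simp add: d_def sum_subtractf)
  have "0 \<le> (w t - w (Suc t)) * (\<Sum>s\<le>t. d s)" for t
    using D decreasing by simp
  then have "0 \<le> w m * (\<Sum>s\<le>m. d s) + (\<Sum>t<m. (w t - w (Suc t)) * (\<Sum>s\<le>t. d s))"
    using D nonneg by (simp add: sum_nonneg)
  also have "\<dots> = (\<Sum>t<n. w t * d t)"
    unfolding Suc by (rule summation_by_parts_lessThan_Suc[symmetric])
  finally show ?thesis by (simp add: d_def algebra_simps sum_subtractf)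
qed

lemma sum_lessThan_eq_sum_over_partition:
  fixes F :: "nat \<Rightarrow> 'a::comm_monoid_add" and B :: "nat \<Rightarrow> nat set"
  assumes "\<And>t. t < n \<Longrightarrow> B t \<subseteq> {..<N}"
    and "\<And>s t. s < n \<Longrightarrow> t < n \<Longrightarrow> s \<noteq> t \<Longrightarrow> B s \<inter> B t = {}"
    and "\<And>i. i < N \<Longrightarrow> i \<notin> (\<Union>t<n. B t) \<Longrightarrow> F i = 0"
  shows "(\<Sum>i<N. F i) = (\<Sum>t<n. \<Sum>i\<in>B t. F i)"
proof -
  have fin: "finite (B t)" if "t < n" for t
    using assms(1) that finite_subset by blast
  have "(\<Sum>i<N. F i) = (\<Sum>i\<in>(\<Union>t<n. B t). F i)"
    by (rule sum.mono_neutral_right) (use assms(1,3) in auto)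
  also have "\<dots> = (\<Sum>t<n. \<Sum>i\<in>B t. F i)"
    by (rule sum.UNION_disjoint) (use fin assms(2) in auto)
  finally show ?thesis .
qed

definition top_indices :: "nat \<Rightarrow> (nat \<Rightarrow> real) \<Rightarrow> nat \<Rightarrow> nat set" where
  "top_indices N W m = {i. i < N \<and> mag_rank N W i < m}"

definition top_abs_sum :: "nat \<Rightarrow> (nat \<Rightarrow> real) \<Rightarrow> nat \<Rightarrow> real" where
  "top_abs_sum N W m = (\<Sum>i\<in>top_indices N W m. \<bar>W i\<bar>)"

lemma mag_rank_less: "i < N \<Longrightarrow> mag_rank N W i < N"
proof -
  assume "i < N"
  have "card {j. j < N \<and> \<bar>W j\<bar> > \<bar>W i\<bar>} \<le> card ({..<N} - {i})"
    by (intro card_mono) auto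
  also have "\<dots> = N - 1" using \<open>i < N\<close> by simp
  finally show ?thesis unfolding mag_rank_def using \<open>i < N\<close> by linarith
qed

lemma mag_rank_strict_antimono:
  assumes "j < N" "\<bar>W i\<bar> < \<bar>W j\<bar>"
  shows "mag_rank N W j < mag_rank N W i"
proof -
  have "{l. l < N \<and> \<bar>W l\<bar> > \<bar>W j\<bar>} \<subset> {l. l < N \<and> \<bar>W l\<bar> > \<bar>W i\<bar>}"
    using assms by auto
  then show ?thesis unfolding mag_rank_def by (intro psubset_card_mono) auto
qed

lemma abs_less_if_mag_rank_less:
  assumes "inj_on (\<lambda>i. \<bar>W i\<bar>) {..<N}" "i < N" "j < N" "mag_rank N W j < mag_rank N W i"
  shows "\<bar>W i\<bar> < \<bar>W j\<bar>"
proof -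
  have "i \<noteq> j" using assms(4) by auto
  then have "\<bar>W i\<bar> \<noteq> \<bar>W j\<bar>" using assms(1-3) by (auto dest: inj_onD)
  moreover have "\<not> \<bar>W j\<bar> < \<bar>W i\<bar>"
    using mag_rank_strict_antimono[of i N W j] assms(2,4) by auto
  ultimately show ?thesis by linarith
qed

lemma inj_on_mag_rank:
  assumes "inj_on (\<lambda>i. \<bar>W i\<bar>) {..<N}"
  shows "inj_on (mag_rank N W) {..<N}"
proof (rule inj_onI, rule ccontr)
  fix i j assume "i \<in> {..<N}" "j \<in> {..<N}" "mag_rank N W i = mag_rank N W j" "i \<noteq> j"
  moreover from this have "\<bar>W i\<bar> \<noteq> \<bar>W j\<bar>" using assms by (auto dest: inj_onD)
  ultimately show False
    using mag_rank_strict_antimono[of i N W j] mag_rank_strict_antimono[of j N W i]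
    by (auto simp: linorder_neq_iff)
qed

lemma mag_rank_image:
  assumes "inj_on (\<lambda>i. \<bar>W i\<bar>) {..<N}"
  shows "mag_rank N W ` {..<N} = {..<N}"
  using endo_inj_surj[OF _ _ inj_on_mag_rank[OF assms]] mag_rank_less by auto

lemma card_top_indices:
  assumes "inj_on (\<lambda>i. \<bar>W i\<bar>) {..<N}" "m \<le> N"
  shows "card (top_indices N W m) = m"
proof -
  have "mag_rank N W ` top_indices N W m = mag_rank N W ` {..<N} \<inter> {..<m}"
    by (auto simp: top_indices_def)
  also have "\<dots> = {..<m}" using mag_rank_image[OF assms(1)] assms(2) by auto
  finally have "mag_rank N W ` top_indices N W m = {..<m}" .
  moreover have "inj_on (mag_rank N W) (top_indices N W m)"
    by (rule inj_on_subset[OF inj_on_mag_rank[OF assms(1)]]) (auto simp: top_indices_def)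
  ultimately show ?thesis by (metis card_image card_lessThan)
qed

lemma sum_abs_le_top_abs_sum:
  assumes "inj_on (\<lambda>i. \<bar>W i\<bar>) {..<N}" "A \<subseteq> {..<N}"
  shows "(\<Sum>i\<in>A. \<bar>W i\<bar>) \<le> top_abs_sum N W (card A)"
proof -
  define B where "B = top_indices N W (card A)"
  have fin: "finite A" "finite B" using assms(2) finite_subset by (auto simp: B_def top_indices_def)
  have "card B = card A"
    unfolding B_def using assms card_mono[OF _ assms(2)] by (intro card_top_indices) auto
  then have "card (A - B) = card (B - A)"
    using fin by (simp add: card_Diff_subset_Int Int_commute)
  moreover have "\<bar>W i\<bar> \<le> \<bar>W j\<bar>" if "i \<in> A - B" "j \<in> B - A" for i j
    using that assms(2) abs_less_if_mag_rank_less[OF assms(1), of i j]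
    by (fastforce simp: B_def top_indices_def)
  ultimately have "(\<Sum>i\<in>A - B. \<bar>W i\<bar>) \<le> (\<Sum>i\<in>B - A. \<bar>W i\<bar>)"
    using fin by (intro sum_le_sum_if_card_eq_and_dominated) auto
  moreover have "(\<Sum>i\<in>A. \<bar>W i\<bar>) = (\<Sum>i\<in>A \<inter> B. \<bar>W i\<bar>) + (\<Sum>i\<in>A - B. \<bar>W i\<bar>)"
    and "(\<Sum>i\<in>B. \<bar>W i\<bar>) = (\<Sum>i\<in>A \<inter> B. \<bar>W i\<bar>) + (\<Sum>i\<in>B - A. \<bar>W i\<bar>)"
    using sum.Int_Diff[OF fin(1), of _ B] sum.Int_Diff[OF fin(2), of _ A] by (simp_all add: Int_commute)
  ultimately show ?thesis unfolding top_abs_sum_def B_def[symmetric] by linarith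
qed

definition block_indices :: "nat \<Rightarrow> (nat \<Rightarrow> real) \<Rightarrow> (nat \<Rightarrow> nat) \<Rightarrow> nat \<Rightarrow> nat set" where
  "block_indices N W k t = top_indices N W (\<Sum>s\<le>t. k s) - top_indices N W (\<Sum>s<t. k s)"

lemma block_eq: "block N W k t i = (if i \<in> block_indices N W k t then W i else 0)"
  by (auto simp: block_def block_indices_def top_indices_def)

lemma block_indices_subset: "block_indices N W k t \<subseteq> {..<N}"
  by (auto simp: block_indices_def top_indices_def)

lemma top_indices_mono: "m \<le> m' \<Longrightarrow> top_indices N W m \<subseteq> top_indices N W m'"
  by (auto simp: top_indices_def)

lemma finite_top_indices: "finite (top_indices N W m)"
  by (simp add: top_indices_def)

lemma sum_lessThan_le_atMost:
  fixes k :: "nat \<Rightarrow> nat"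
  shows "(\<Sum>s<t. k s) \<le> (\<Sum>s\<le>t. k s)"
  by (rule sum_mono2) auto

lemma block_indices_disjoint:
  assumes "s \<noteq> t"
  shows "block_indices N W k s \<inter> block_indices N W k t = {}"
proof -
  have "block_indices N W k a \<inter> block_indices N W k b = {}" if "a < b" for a b
  proof -
    have "(\<Sum>r\<le>a. k r) \<le> (\<Sum>r<b. k r)" by (rule sum_mono2) (use that in auto)
    then show ?thesis unfolding block_indices_def using top_indices_mono by blast
  qed
  then show ?thesis using assms by (metis inf_commute linorder_neqE_nat)
qed

lemma card_block_indices:
  assumes "inj_on (\<lambda>i. \<bar>W i\<bar>) {..<N}" "(\<Sum>s\<le>t. k s) \<le> N"
  shows "card (block_indices N W k t) = k t"
proof -
  note le = sum_lessThan_le_atMost[of k t]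
  have "card (block_indices N W k t) = (\<Sum>s\<le>t. k s) - (\<Sum>s<t. k s)"
    unfolding block_indices_def card_Diff_subset[OF finite_top_indices top_indices_mono[OF le]]
    using assms le by (simp add: card_top_indices)
  also have "\<dots> = k t" by (simp add: lessThan_Suc_atMost[symmetric])
  finally show ?thesis .
qed

lemma l1norm_block:
  "l1norm N (block N W k t) = top_abs_sum N W (\<Sum>s\<le>t. k s) - top_abs_sum N W (\<Sum>s<t. k s)"
proof -
  have "l1norm N (block N W k t) = (\<Sum>i\<in>block_indices N W k t. \<bar>W i\<bar>)"
    unfolding l1norm_def block_eq using block_indices_subset[of N W k t]
    by (simp add: if_distrib sum.If_cases Int_absorb1 cong: if_cong)
  also have "\<dots> = top_abs_sum N W (\<Sum>s\<le>t. k s) - top_abs_sum N W (\<Sum>s<t. k s)"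
    unfolding block_indices_def top_abs_sum_def
    by (rule sum_diff) (simp_all add: finite_top_indices top_indices_mono sum_lessThan_le_atMost)
  finally show ?thesis .
qed

lemma sum_l1norm_block_atMost:
  "(\<Sum>s\<le>t. l1norm N (block N W k s)) = top_abs_sum N W (\<Sum>s\<le>t. k s)"
  by (induction t) (simp_all add: l1norm_block top_abs_sum_def top_indices_def lessThan_Suc_atMost)

definition level_set :: "nat \<Rightarrow> (nat \<Rightarrow> real) \<Rightarrow> nat \<Rightarrow> nat set" where
  "level_set N Q t = {i. i < N \<and> \<bar>Q i\<bar> = 2 powr (- real t)}"

definition level_count :: "nat \<Rightarrow> (nat \<Rightarrow> real) \<Rightarrow> nat \<Rightarrow> nat" where
  "level_count N Q t = card (level_set N Q t)"

lemma level_set_subset: "level_set N Q t \<subseteq> {..<N}"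
  by (auto simp: level_set_def)

lemma level_sets_disjoint: "s \<noteq> t \<Longrightarrow> level_set N Q s \<inter> level_set N Q t = {}"
  by (auto simp: level_set_def powr_inj)

lemma finite_level_set: "finite (level_set N Q t)"
  by (simp add: level_set_def)

lemma abs_in_quant_levels:
  "x \<in> quant_levels n \<Longrightarrow> x = 0 \<or> (\<exists>t<n. \<bar>x\<bar> = 2 powr (- real t))"
  by (auto simp: quant_levels_def abs_mult)

lemma sum_over_level_sets:
  fixes F :: "nat \<Rightarrow> 'a::comm_monoid_add"
  assumes "feasible n N Q" "\<And>i. Q i = 0 \<Longrightarrow> F i = 0"
  shows "(\<Sum>i<N. F i) = (\<Sum>t<n. \<Sum>i\<in>level_set N Q t. F i)"
proof (rule sum_lessThan_eq_sum_over_partition)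
  fix i assume "i < N" "i \<notin> (\<Union>t<n. level_set N Q t)"
  then show "F i = 0"
    using assms abs_in_quant_levels by (force simp: feasible_def level_set_def)
qed (simp_all add: level_set_subset level_sets_disjoint)

lemma sum_level_count_le: "(\<Sum>t<n. level_count N Q t) \<le> N"
proof -
  have "(\<Sum>t<n. level_count N Q t) = card (\<Union>t<n. level_set N Q t)"
    unfolding level_count_def
    by (rule card_UN_disjoint[symmetric]) (simp_all add: finite_level_set level_sets_disjoint)
  also have "\<dots> \<le> card {..<N}" by (rule card_mono) (auto simp: level_set_def)
  finally show ?thesis by simp
qed

lemma sum_sq_eq_v_fun_level_count:
  assumes "feasible n N Q"
  shows "(\<Sum>i<N. (Q i)\<^sup>2) = v_fun n (level_count N Q)"
proof -
  have "(Q i)\<^sup>2 = 2 powr (- 2 * real t)" if "i \<in> level_set N Q t" for i t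
  proof -
    have "(Q i)\<^sup>2 = (2 powr (- real t))\<^sup>2"
      using that by (metis (mono_tags) power2_abs level_set_def mem_Collect_eq)
    then show ?thesis by (simp add: power2_eq_square powr_add[symmetric])
  qed
  then have "(\<Sum>i<N. (Q i)\<^sup>2) = (\<Sum>t<n. \<Sum>i\<in>level_set N Q t. 2 powr (- 2 * real t))"
    by (subst sum_over_level_sets[OF assms]) simp_all
  then show ?thesis by (simp add: v_fun_def level_count_def)
qed

lemma partial_sums_level_abs_le:
  assumes "inj_on (\<lambda>i. \<bar>W i\<bar>) {..<N}"
  shows "(\<Sum>s\<le>t. \<Sum>i\<in>level_set N Q s. \<bar>W i\<bar>) \<le> top_abs_sum N W (\<Sum>s\<le>t. level_count N Q s)"
proof -
  have "(\<Sum>s\<le>t. \<Sum>i\<in>level_set N Q s. \<bar>W i\<bar>) = (\<Sum>i\<in>(\<Union>s\<le>t. level_set N Q s). \<bar>W i\<bar>)"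
    by (rule sum.UNION_disjoint[symmetric]) (simp_all add: finite_level_set level_sets_disjoint)
  also have "\<dots> \<le> top_abs_sum N W (card (\<Union>s\<le>t. level_set N Q s))"
    by (rule sum_abs_le_top_abs_sum[OF assms]) (auto simp: level_set_def)
  also have "card (\<Union>s\<le>t. level_set N Q s) = (\<Sum>s\<le>t. level_count N Q s)"
    unfolding level_count_def
    by (rule card_UN_disjoint) (simp_all add: finite_level_set level_sets_disjoint)
  finally show ?thesis .
qed

lemma sum_abs_mult_le_u_fun_level_count:
  assumes "inj_on (\<lambda>i. \<bar>W i\<bar>) {..<N}" "feasible n N Q"
  shows "(\<Sum>i<N. \<bar>Q i\<bar> * \<bar>W i\<bar>) \<le> u_fun n N W (level_count N Q)"
proof -
  have "(\<Sum>i<N. \<bar>Q i\<bar> * \<bar>W i\<bar>) = (\<Sum>t<n. \<Sum>i\<in>level_set N Q t. \<bar>Q i\<bar> * \<bar>W i\<bar>)"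
    by (rule sum_over_level_sets[OF assms(2)]) simp
  also have "\<dots> = (\<Sum>t<n. 2 powr (- real t) * (\<Sum>i\<in>level_set N Q t. \<bar>W i\<bar>))"
    by (simp add: sum_distrib_left level_set_def)
  also have "\<dots> \<le> (\<Sum>t<n. 2 powr (- real t) * l1norm N (block N W (level_count N Q) t))"
    using partial_sums_level_abs_le[OF assms(1)]
    by (intro weighted_sum_le_if_partial_sums_le) (simp_all add: sum_l1norm_block_atMost)
  finally show ?thesis by (simp add: u_fun_def)
qed

lemma powr_floor_log2_bounds:
  fixes y :: real
  assumes "y > 0"
  shows "2 powr \<lfloor>log 2 y\<rfloor> \<le> y" "y < 2 * 2 powr \<lfloor>log 2 y\<rfloor>"
  using floor_log_eq_powr_iff[OF assms, of 2 "\<lfloor>log 2 y\<rfloor>"] by (simp_all add: powr_add)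

lemma nearest_power_of_two:
  fixes r :: real and s :: int
  assumes "r > 0"
  shows "\<bar>2 powr \<lfloor>log 2 (4 * r / 3)\<rfloor> - r\<bar> \<le> \<bar>2 powr s - r\<bar>"
proof -
  define m where "m = \<lfloor>log 2 (4 * r / 3)\<rfloor>"
  define p :: real where "p = 2 powr m"
  \<comment> \<open>\<open>r\<close> lies between \<open>3p/4\<close> and \<open>3p/2\<close>, the midpoints between \<open>p\<close> and its
    neighbouring powers of two\<close>
  have p: "3 * p \<le> 4 * r" "2 * r < 3 * p"
    using powr_floor_log2_bounds[of "4 * r / 3"] assms unfolding p_def m_def by simp_all
  consider "s = m" | "m + 1 \<le> s" | "s \<le> m - 1" by linarith
  then show ?thesis
  proof cases
    case 1
    then show ?thesis by (simp add: p_def m_def)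
  next
    case 2
    then have "2 powr (m + 1) \<le> 2 powr s" by (intro powr_mono) auto
    then have "2 * p \<le> 2 powr s" by (simp add: p_def powr_add)
    with p show ?thesis unfolding m_def[symmetric] p_def[symmetric] by (auto simp: abs_if)
  next
    case 3
    then have "2 powr s \<le> 2 powr (m - 1)" by (intro powr_mono) auto
    then have "2 powr s \<le> p / 2" by (simp add: p_def powr_diff)
    with p show ?thesis unfolding m_def[symmetric] p_def[symmetric] by (auto simp: abs_if)
  qed
qed

lemma g_fun_eq:
  assumes "v \<noteq> 0"
  shows "g_fun u v = v * (2 powr \<lfloor>log 2 (4 * u / (3 * v))\<rfloor>)\<^sup>2
    - 2 * u * 2 powr \<lfloor>log 2 (4 * u / (3 * v))\<rfloor>"
  using assms unfolding g_fun_def by (simp add: power2_eq_square field_simps)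

lemma g_fun_le:
  fixes s :: int
  assumes "u > 0" "v > 0"
  shows "g_fun u v \<le> v * (2 powr s)\<^sup>2 - 2 * u * 2 powr s"
proof -
  define r where "r = u / v"
  have "(2 powr \<lfloor>log 2 (4 * r / 3)\<rfloor> - r)\<^sup>2 \<le> (2 powr s - r)\<^sup>2"
    using nearest_power_of_two[of r s] assms by (simp add: r_def abs_le_square_iff)
  moreover have "v * (2 powr s)\<^sup>2 - 2 * u * 2 powr s = v * (2 powr s - r)\<^sup>2 - u\<^sup>2 / v"
    using assms by (simp add: r_def power2_eq_square field_simps)
  moreover have "4 * r / 3 = 4 * u / (3 * v)" by (simp add: r_def)
  ultimately show ?thesis
    using assms unfolding g_fun_def r_def[symmetric] by (simp add: mult_left_mono)
qed

lemma g_fun_nonpos: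
  assumes "u > 0" "v > 0"
  shows "g_fun u v \<le> 0"
proof -
  define p :: real where "p = 2 powr \<lfloor>log 2 (4 * u / (3 * v))\<rfloor>"
  have "p \<le> 4 * u / (3 * v)"
    using powr_floor_log2_bounds(1)[of "4 * u / (3 * v)"] assms by (simp add: p_def)
  then have "v * p \<le> 2 * u" using assms by (simp add: field_simps)
  then have "v * p * p \<le> 2 * u * p" by (simp add: p_def mult_right_mono)
  then show ?thesis using assms by (simp add: g_fun_eq power2_eq_square p_def[symmetric])
qed

definition quantizer :: "nat \<Rightarrow> nat \<Rightarrow> (nat \<Rightarrow> real) \<Rightarrow> (nat \<Rightarrow> nat) \<Rightarrow> nat \<Rightarrow> real" where
  "quantizer n N W k i = (\<Sum>t<n. 2 powr (- real t) * sgn (block N W k t i))"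

lemma quantizer_in_block:
  assumes "t < n" "i \<in> block_indices N W k t"
  shows "quantizer n N W k i = 2 powr (- real t) * sgn (W i)"
proof -
  have "i \<notin> block_indices N W k t'" if "t' \<noteq> t" for t'
    using block_indices_disjoint[OF that] assms(2) by blast
  then have "quantizer n N W k i = (\<Sum>t'\<in>{t}. 2 powr (- real t') * sgn (block N W k t' i))"
    unfolding quantizer_def using assms(1) by (intro sum.mono_neutral_right) (auto simp: block_eq)
  then show ?thesis using assms(2) by (simp add: block_eq)
qed

lemma quantizer_outside_blocks:
  "(\<And>t. t < n \<Longrightarrow> i \<notin> block_indices N W k t) \<Longrightarrow> quantizer n N W k i = 0"
  unfolding quantizer_def by (simp add: block_eq)

lemma feasible_quantizer: "feasible n N (quantizer n N W k)"
  unfolding feasible_def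
proof (intro allI impI)
  fix i
  show "quantizer n N W k i \<in> quant_levels n"
  proof (cases "\<exists>t<n. i \<in> block_indices N W k t")
    case True
    then obtain t where t: "t < n" "i \<in> block_indices N W k t" by blast
    then have "quantizer n N W k i = sgn (W i) * 2 powr (- real t)"
      by (simp add: quantizer_in_block mult.commute)
    moreover have "sgn (W i) = 0 \<or> sgn (W i) \<in> {-1, 1}" by (simp add: sgn_real_def)
    ultimately show ?thesis using t(1) unfolding quant_levels_def by auto
  next
    case False
    then show ?thesis by (simp add: quantizer_outside_blocks quant_levels_def)
  qed
qed

lemma sum_quantizer_mult_eq_u_fun: "(\<Sum>i<N. quantizer n N W k i * W i) = u_fun n N W k"
proof -
  have "sgn (block N W k t i) * W i = \<bar>block N W k t i\<bar>" for t i
    by (simp add: block_eq abs_sgn)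
  then have "(\<Sum>i<N. quantizer n N W k i * W i) = (\<Sum>i<N. \<Sum>t<n. 2 powr (- real t) * \<bar>block N W k t i\<bar>)"
    unfolding quantizer_def by (simp add: sum_distrib_right mult.assoc)
  also have "\<dots> = u_fun n N W k"
    by (subst sum.swap) (simp add: u_fun_def l1norm_def sum_distrib_left)
  finally show ?thesis .
qed

lemma sum_quantizer_sq_le_v_fun:
  assumes "inj_on (\<lambda>i. \<bar>W i\<bar>) {..<N}" "(\<Sum>t<n. k t) \<le> N"
  shows "(\<Sum>i<N. (quantizer n N W k i)\<^sup>2) \<le> v_fun n k"
proof -
  have card: "card (block_indices N W k t) = k t" if "t < n" for t
  proof (rule card_block_indices[OF assms(1)])
    have "(\<Sum>s\<le>t. k s) \<le> (\<Sum>s<n. k s)" by (rule sum_mono2) (use that in auto)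
    then show "(\<Sum>s\<le>t. k s) \<le> N" using assms(2) by linarith
  qed
  have sq: "(quantizer n N W k i)\<^sup>2 \<le> 2 powr (- 2 * real t)"
    if "t < n" "i \<in> block_indices N W k t" for t i
  proof -
    have "(quantizer n N W k i)\<^sup>2 = (2 powr (- real t))\<^sup>2 * (sgn (W i))\<^sup>2"
      by (simp add: quantizer_in_block[OF that] power_mult_distrib)
    also have "\<dots> \<le> (2 powr (- real t))\<^sup>2" by (simp add: sgn_real_def)
    also have "\<dots> = 2 powr (- 2 * real t)" by (simp add: power2_eq_square powr_add[symmetric])
    finally show ?thesis .
  qed
  have "(\<Sum>i<N. (quantizer n N W k i)\<^sup>2) = (\<Sum>t<n. \<Sum>i\<in>block_indices N W k t. (quantizer n N W k i)\<^sup>2)"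
    by (rule sum_lessThan_eq_sum_over_partition)
      (simp_all add: block_indices_subset block_indices_disjoint quantizer_outside_blocks)
  also have "\<dots> \<le> (\<Sum>t<n. \<Sum>i\<in>block_indices N W k t. 2 powr (- 2 * real t))"
    using sq by (intro sum_mono) auto
  also have "\<dots> = v_fun n k" by (simp add: card v_fun_def mult.commute)
  finally show ?thesis .
qed

lemma objective_expand:
  "objective N W s Q = (2 powr s)\<^sup>2 * (\<Sum>i<N. (Q i)\<^sup>2)
    - 2 * 2 powr s * (\<Sum>i<N. Q i * W i) + (\<Sum>i<N. (W i)\<^sup>2)"
proof -
  have "objective N W s Q
      = (\<Sum>i<N. (2 powr s)\<^sup>2 * (Q i)\<^sup>2 - 2 * 2 powr s * (Q i * W i) + (W i)\<^sup>2)"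
    unfolding objective_def by (rule sum.cong) (auto simp: power2_eq_square algebra_simps)
  then show ?thesis by (simp add: sum.distrib sum_subtractf sum_distrib_left)
qed

lemma objective_ge_level_count:
  assumes "inj_on (\<lambda>i. \<bar>W i\<bar>) {..<N}" "feasible n N Q"
  shows "(2 powr s)\<^sup>2 * v_fun n (level_count N Q) - 2 * 2 powr s * u_fun n N W (level_count N Q)
      + (\<Sum>i<N. (W i)\<^sup>2) \<le> objective N W s Q"
proof -
  have "(\<Sum>i<N. Q i * W i) \<le> (\<Sum>i<N. \<bar>Q i\<bar> * \<bar>W i\<bar>)"
    by (intro sum_mono) (metis abs_ge_self abs_mult)
  also have "\<dots> \<le> u_fun n N W (level_count N Q)"
    by (rule sum_abs_mult_le_u_fun_level_count[OF assms])
  finally have "2 * 2 powr s * (\<Sum>i<N. Q i * W i) \<le> 2 * 2 powr s * u_fun n N W (level_count N Q)"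
    by simp
  then show ?thesis
    unfolding objective_expand sum_sq_eq_v_fun_level_count[OF assms(2)] by linarith
qed

lemma u_fun_eq_0_if_zero:
  assumes "\<And>t. t < n \<Longrightarrow> k t = 0"
  shows "u_fun n N W k = 0"
proof -
  have "block_indices N W k t = {}" if "t < n" for t
    using assms that by (simp add: block_indices_def)
  then show ?thesis by (simp add: u_fun_def l1norm_def block_eq)
qed

lemma v_fun_pos: "t < n \<Longrightarrow> k t \<noteq> 0 \<Longrightarrow> 0 < v_fun n k"
  unfolding v_fun_def by (rule sum_pos2[where i = t]) auto

lemma objective_ge_sq_norm_plus_min_g:
  assumes "inj_on (\<lambda>i. \<bar>W i\<bar>) {..<N}" "feasible n N Q" "c \<le> 0"
    and min: "\<And>k. admissible n N k \<Longrightarrow> c \<le> g_fun (u_fun n N W k) (v_fun n k)"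
  shows "(\<Sum>i<N. (W i)\<^sup>2) + c \<le> objective N W s Q"
proof -
  define k where "k = level_count N Q"
  note lower = objective_ge_level_count[OF assms(1,2), of s, folded k_def]
  have "0 \<le> (2 powr s)\<^sup>2 * v_fun n k" unfolding v_fun_def by (simp add: sum_nonneg)
  show ?thesis
  proof (cases "u_fun n N W k = 0")
    case True
    then show ?thesis using lower \<open>0 \<le> (2 powr s)\<^sup>2 * v_fun n k\<close> \<open>c \<le> 0\<close> by simp
  next
    case False
    then obtain t where t: "t < n" "k t \<noteq> 0" using u_fun_eq_0_if_zero by blast
    then have "admissible n N k" using sum_level_count_le by (auto simp: admissible_def k_def)
    moreover have "0 < u_fun n N W k"
      using False by (simp add: u_fun_def l1norm_def order_less_le sum_nonneg)
    ultimately have "c \<le> v_fun n k * (2 powr s)\<^sup>2 - 2 * u_fun n N W k * 2 powr s"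
      using min g_fun_le v_fun_pos[of t n k] t by (meson order_trans)
    then show ?thesis using lower by (simp add: algebra_simps)
  qed
qed

lemma objective_quantizer_le:
  assumes "inj_on (\<lambda>i. \<bar>W i\<bar>) {..<N}" "admissible n N k"
  shows "objective N W \<lfloor>log 2 (4 * u_fun n N W k / (3 * v_fun n k))\<rfloor> (quantizer n N W k)
    \<le> (\<Sum>i<N. (W i)\<^sup>2) + g_fun (u_fun n N W k) (v_fun n k)"
proof -
  define u where "u = u_fun n N W k"
  define v where "v = v_fun n k"
  define x :: real where "x = 2 powr \<lfloor>log 2 (4 * u / (3 * v))\<rfloor>"
  have "0 < v" using assms(2) v_fun_pos by (auto simp: admissible_def v_def)
  have "(\<Sum>i<N. (quantizer n N W k i)\<^sup>2) \<le> v"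
    using assms unfolding v_def by (intro sum_quantizer_sq_le_v_fun) (auto simp: admissible_def)
  then have "objective N W \<lfloor>log 2 (4 * u / (3 * v))\<rfloor> (quantizer n N W k)
      \<le> x\<^sup>2 * v - 2 * x * u + (\<Sum>i<N. (W i)\<^sup>2)"
    unfolding objective_expand sum_quantizer_mult_eq_u_fun x_def[symmetric] u_def[symmetric]
    by (simp add: mult_left_mono)
  also have "x\<^sup>2 * v - 2 * x * u = g_fun u v"
    using g_fun_eq[of v u] \<open>0 < v\<close> by (simp add: x_def algebra_simps)
  finally show ?thesis by (simp add: u_def v_def)
qed

lemma min_g_fun_nonpos:
  assumes "inj_on (\<lambda>i. \<bar>W i\<bar>) {..<N}" "i < N" "W i \<noteq> 0" "0 < n"
    and min: "\<And>k. admissible n N k \<Longrightarrow> c \<le> g_fun (u_fun n N W k) (v_fun n k)"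
  shows "c \<le> 0"
proof -
  define k :: "nat \<Rightarrow> nat" where "k t = (if t = 0 then 1 else 0)" for t
  have "(\<Sum>t<n. k t) = 1" using \<open>0 < n\<close> by (simp add: k_def sum.If_cases lessThan_def)
  then have "admissible n N k" using assms(2,4) by (auto simp: admissible_def k_def)
  have "\<bar>W i\<bar> \<le> top_abs_sum N W 1"
    using sum_abs_le_top_abs_sum[OF assms(1), of "{i}"] assms(2) by simp
  also have "\<dots> = l1norm N (block N W k 0)"
    using sum_l1norm_block_atMost[where t = 0 and k = k] by (simp add: k_def)
  also have "\<dots> \<le> u_fun n N W k"
    unfolding u_fun_def using \<open>0 < n\<close>
    by (intro member_le_sum[of 0 _ "\<lambda>t. 2 powr - real t * l1norm N (block N W k t)", simplified])
      (auto simp: l1norm_def sum_nonneg)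
  finally have "0 < u_fun n N W k" using assms(3) by simp
  moreover have "0 < v_fun n k" using \<open>0 < n\<close> by (intro v_fun_pos[of 0]) (auto simp: k_def)
  ultimately show ?thesis using min[OF \<open>admissible n N k\<close>] g_fun_nonpos by (meson order_trans)
qed

theorem theorem1:
  fixes b n N :: nat and W :: "nat \<Rightarrow> real" and kstar :: "nat \<Rightarrow> nat"
  assumes "b \<ge> 2"
    and "n = 2 ^ (b - 2)"
    and "\<exists>i<N. W i \<noteq> 0"
    and "\<forall>i<N. \<forall>j<N. i \<noteq> j \<longrightarrow> \<bar>W i\<bar> \<noteq> \<bar>W j\<bar>"
    and "admissible n N kstar"
    and "\<forall>k. admissible n N k \<longrightarrow>
           g_fun (u_fun n N W kstar) (v_fun n kstar) \<le> g_fun (u_fun n N W k) (v_fun n k)"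
  shows "let Qs = (\<lambda>i. \<Sum>t<n. 2 powr (- real t) * sgn (block N W kstar t i));
             ss = \<lfloor>log 2 (4 * (\<Sum>t<n. 2 powr (- real t) * l1norm N (block N W kstar t))
                           / (3 * (\<Sum>t<n. real (kstar t) * 2 powr (- 2 * real t))))\<rfloor>
         in feasible n N Qs \<and>
            (\<forall>s Q. feasible n N Q \<longrightarrow> objective N W ss Qs \<le> objective N W s Q)"
proof -
  have inj: "inj_on (\<lambda>i. \<bar>W i\<bar>) {..<N}" using assms(4) by (auto intro: inj_onI)
  obtain i where "i < N" "W i \<noteq> 0" using assms(3) by blast
  have "0 < n" using assms(2) by simp
  define c where "c = g_fun (u_fun n N W kstar) (v_fun n kstar)"
  have "c \<le> 0"
    using min_g_fun_nonpos[OF inj \<open>i < N\<close> \<open>W i \<noteq> 0\<close> \<open>0 < n\<close>] assms(6)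
    unfolding c_def by blast
  then have "objective N W \<lfloor>log 2 (4 * u_fun n N W kstar / (3 * v_fun n kstar))\<rfloor> (quantizer n N W kstar)
      \<le> objective N W s Q" if "feasible n N Q" for s Q
    using objective_quantizer_le[OF inj assms(5)] objective_ge_sq_norm_plus_min_g[OF inj that]
      assms(6) unfolding c_def by (meson order_trans)
  then show ?thesis
    using feasible_quantizer unfolding Let_def u_fun_def v_fun_def quantizer_def by blast
qed

end
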